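(* Let $\mathcal{A}=(A,\{\to_{1,\alpha}\}_{\alpha\in I})$ and $\mathcal{B}=(A,\{\to_{2,\beta}\}_{\beta\in I})$ be $I$-indexed ARSs on the same set $A$, and let $>$ be a well-founded order on $I$ having a least element $\bot$. Suppose $\to_{1,\bot}$ and $\to_{2,\bot}$ commute. If every local peak $b\;{}_{1,\alpha}\!\!\leftarrow a\to_{2,\beta} c$ with $(\alpha,\beta)\in I^2\setminus\{(\bot,\bot)\}$ is decreasing, then $\mathcal{A}$ and $\mathcal{B}$ commute.
   Context: An $I$-indexed abstract rewrite system (ARS) is a pair $(A,\{\to_\alpha\}_{\alpha\in I})$ of a set and a family of binary relations on it; $\to_\mathcal{A}$ is the union of all its relations. Relations $\to_1,\to_2$ commute if ${}_1\!\!\leftarrow^*\cdot\to_2^*\;\subseteq\;\to_2^*\cdot{}_1\!\!\leftarrow^*$; ARSs $\mathcal{A},\mathcal{B}$ commute if $\to_\mathcal{A}$ and $\to_\mathcal{B}$ commute. For $\alpha\in I$, $\curlyvee\alpha=\{\gamma\in I\mid\alpha>\gamma\}$ and $\curlyvee\alpha\beta=\curlyvee\alpha\cup\curlyvee\beta$. For $K\subseteq I$, $\leftrightarrow_K$ is the union of ${}_{1,\gamma}\!\!\leftarrow$ and $\to_{2,\gamma}$ over $\gamma\in K$. A local peak $b\;{}_{1,\alpha}\!\!\leftarrow a\to_{2,\beta} c$ is decreasing if $b\leftrightarrow^*_{\curlyvee\alpha}\cdot\to^=_{2,\beta}\cdot\leftrightarrow^*_{\curlyvee\alpha\beta}\cdot{}_{1,\alpha}\!\!\leftarrow^=\cdot\leftrightarrow^*_{\curlyvee\beta}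 c$, where $\to^=$ denotes the reflexive closure. *)

theory Defs
  imports Main
begin

text \<open>An I-indexed ARS on a carrier type 'a is a family R :: 'i => ('a * 'a) set.
  The order on indices is a relation gt, where (alpha, gamma) : gt means alpha > gamma.\<close>

definition commute :: "('a \<times> 'a) set \<Rightarrow> ('a \<times> 'a) set \<Rightarrow> bool" where
  "commute r1 r2 \<longleftrightarrow> (r1\<inverse>)\<^sup>* O r2\<^sup>* \<subseteq> r2\<^sup>* O (r1\<inverse>)\<^sup>*"

definition union_ars :: "('i \<Rightarrow> ('a \<times> 'a) set) \<Rightarrow> ('a \<times> 'a) set" where
  "union_ars R = (\<Union>\<alpha>. R \<alpha>)"

definition ars_commute :: "('i \<Rightarrow> ('a \<times> 'a) set) \<Rightarrow> ('i \<Rightarrow> ('a \<times> 'a) set) \<Rightarrow> bool" where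
  "ars_commute R1 R2 \<longleftrightarrow> commute (union_ars R1) (union_ars R2)"

definition below :: "('i \<times> 'i) set \<Rightarrow> 'i \<Rightarrow> 'i set" where
  "below gt \<alpha> = {\<gamma>. (\<alpha>, \<gamma>) \<in> gt}"

definition below2 :: "('i \<times> 'i) set \<Rightarrow> 'i \<Rightarrow> 'i \<Rightarrow> 'i set" where
  "below2 gt \<alpha> \<beta> = below gt \<alpha> \<union> below gt \<beta>"

definition conv_K :: "('i \<Rightarrow> ('a \<times> 'a) set) \<Rightarrow> ('i \<Rightarrow> ('a \<times> 'a) set) \<Rightarrow> 'i set \<Rightarrow> ('a \<times> 'a) set" where
  "conv_K R1 R2 K = (\<Union>\<gamma>\<in>K. (R1 \<gamma>)\<inverse> \<union> R2 \<gamma>)"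

definition decreasing_peak ::
  "('i \<times> 'i) set \<Rightarrow> ('i \<Rightarrow> ('a \<times> 'a) set) \<Rightarrow> ('i \<Rightarrow> ('a \<times> 'a) set) \<Rightarrow> 'i \<Rightarrow> 'i \<Rightarrow> 'a \<Rightarrow> 'a \<Rightarrow> bool" where
  "decreasing_peak gt R1 R2 \<alpha> \<beta> b c \<longleftrightarrow>
     (b, c) \<in> (conv_K R1 R2 (below gt \<alpha>))\<^sup>* O (R2 \<beta>)\<^sup>= O
               (conv_K R1 R2 (below2 gt \<alpha> \<beta>))\<^sup>* O ((R1 \<alpha>)\<inverse>)\<^sup>= O
               (conv_K R1 R2 (below gt \<beta>))\<^sup>*"

end

theory Submission
  imports Defs "HOL-Library.Multiset"
begin

text \<open>
  Replacing the bottom steps by bottom sequences, i.e. \<open>\<rightarrow>\<^sub>1\<^sub>,\<^sub>\<bottom>\<close> by its reflexive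
  transitive closure and likewise for \<open>\<rightarrow>\<^sub>2\<^sub>,\<^sub>\<bottom>\<close>, changes neither
  \<open>\<rightarrow>\<^sub>\<A>\<^sup>*\<close> nor \<open>\<rightarrow>\<^sub>\<B>\<^sup>*\<close>, and makes every local peak decreasing: a peak
  of two bottom sequences closes because the bottom steps commute, and a bottom sequence against a
  \<open>\<beta>\<close>-step closes by stacking the given decreasing diagrams along the sequence, since the
  bottom label lies below \<open>\<beta>\<close>. It therefore suffices that decreasing local peaks without
  exception imply commutation. For this, van Oostrom's argument measures a \<open>\<rightarrow>\<^sub>2\<close>-sequence
  by the multiset of its labels in which each label hides the later labels below it; a
  \<open>\<rightarrow>\<^sub>1\<^sub>,\<^sub>\<alpha>\<close>-step against a \<open>\<rightarrow>\<^sub>2\<close>-sequence is closed by well-founded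
  induction on these measures, filling in decreasing diagrams, and the closing
  \<open>\<rightarrow>\<^sub>2\<close>-sequence never has a larger measure once labels below \<open>\<alpha>\<close> are disregarded.
\<close>

section \<open>Lexicographic maximum measure\<close>

locale wf_label_order =
  fixes gt :: "('i \<times> 'i) set"
  assumes trans_gt: "trans gt" and wf_less: "wf (gt\<inverse>)"
begin

definition dominated :: "'i set \<Rightarrow> 'i \<Rightarrow> bool" where
  "dominated A \<gamma> \<longleftrightarrow> (\<exists>\<alpha>\<in>A. (\<alpha>, \<gamma>) \<in> gt)"

definition undominated :: "'i set \<Rightarrow> 'i multiset \<Rightarrow> 'i multiset" where
  "undominated A M = {# \<gamma> \<in># M. \<not> dominated A \<gamma> #}"

fun lexmax :: "'i list \<Rightarrow> 'i multiset" where
  "lexmax [] = {#}"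
| "lexmax (\<alpha> # w) = add_mset \<alpha> (undominated {\<alpha>} (lexmax w))"

definition mlt :: "'i multiset \<Rightarrow> 'i multiset \<Rightarrow> bool" where
  "mlt X Y \<longleftrightarrow> (X, Y) \<in> mult (gt\<inverse>)"

definition mle :: "'i multiset \<Rightarrow> 'i multiset \<Rightarrow> bool" where
  "mle X Y \<longleftrightarrow> (X, Y) \<in> (mult (gt\<inverse>))\<^sup>="

definition mle_mod :: "'i set \<Rightarrow> 'i multiset \<Rightarrow> 'i multiset \<Rightarrow> bool" where
  "mle_mod A X Y \<longleftrightarrow> (\<exists>C. (\<forall>\<gamma>\<in>#C. dominated A \<gamma>) \<and> mle X (C + undominated A Y))"

lemma trans_less: "trans (gt\<inverse>)"
  using trans_gt by (simp add: trans_def)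

lemma mlt_trans: "mlt X Y \<Longrightarrow> mlt Y Z \<Longrightarrow> mlt X Z"
  unfolding mlt_def using trans_mult[OF trans_less] by (meson transD)

lemma mle_trans: "mle X Y \<Longrightarrow> mle Y Z \<Longrightarrow> mle X Z"
  using mlt_trans unfolding mle_def mlt_def by auto

lemma mle_mlt_trans: "mle X Y \<Longrightarrow> mlt Y Z \<Longrightarrow> mlt X Z"
  using mlt_trans unfolding mle_def by (auto simp: mlt_def)

lemmas [trans] = mle_trans mle_mlt_trans

lemma mle_refl [simp]: "mle X X"
  by (simp add: mle_def)

lemma mlt_imp_mle: "mlt X Y \<Longrightarrow> mle X Y"
  by (simp add: mlt_def mle_def)

lemma mlt_one_step: "J \<noteq> {#} \<Longrightarrow> \<forall>k\<in>#K. \<exists>j\<in>#J. (j, k) \<in> gt \<Longrightarrow> mlt (I + K) (I + J)"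
  using one_step_implies_mult[of J K "gt\<inverse>" I] unfolding mlt_def by auto

lemma mle_one_step: "\<forall>k\<in>#K. \<exists>j\<in>#J. (j, k) \<in> gt \<Longrightarrow> mle (I + K) (I + J)"
  by (cases "J = {#}") (auto intro: mlt_imp_mle mlt_one_step)

lemma mlt_one_stepE:
  assumes "mlt X Y"
  obtains I J K where "Y = I + J" "X = I + K" "J \<noteq> {#}" "\<forall>k\<in>#K. \<exists>j\<in>#J. (j, k) \<in> gt"
  using mult_implies_one_step[OF trans_less] assms unfolding mlt_def by fastforce

lemma mle_add_left: "mle X Y \<Longrightarrow> mle (Z + X) (Z + Y)"
proof -
  have "mlt (Z + X) (Z + Y)" if "mlt X Y"
    using that by (elim mlt_one_stepE) (simp add: mlt_one_step flip: add.assoc)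
  then show "mle X Y \<Longrightarrow> mle (Z + X) (Z + Y)"
    unfolding mle_def mlt_def by auto
qed

lemma subseteq_imp_mle: "X \<subseteq># Y \<Longrightarrow> mle X Y"
  unfolding mle_def using subset_implies_mult[of X Y] by (auto simp: subset_mset.le_less)

lemma undominated_mle: "mle (undominated A X) X"
  by (rule subseteq_imp_mle) (simp add: undominated_def)

lemma undominated_plus [simp]: "undominated A (X + Y) = undominated A X + undominated A Y"
  by (simp add: undominated_def)

lemma undominated_undominated: "undominated A (undominated B X) = undominated (A \<union> B) X"
  by (auto simp: undominated_def dominated_def filter_filter_mset intro!: filter_mset_cong)

lemma undominated_partition: "X = undominated A X + filter_mset (dominated A) X"
  unfolding undominated_def by (rule multiset_eqI) auto

lemma dominated_trans: "dominated A \<beta> \<Longrightarrow> (\<beta>, \<gamma>) \<in> gt \<Longrightarrow> dominated A \<gamma>"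
  unfolding dominated_def using trans_gt by (meson transD)

lemma mle_undominated: "mle X Y \<Longrightarrow> mle (undominated A X) (undominated A Y)"
proof -
  have "mle (undominated A X) (undominated A Y)" if "mlt X Y"
  proof -
    obtain I J K where IJK: "Y = I + J" "X = I + K" "\<forall>k\<in>#K. \<exists>j\<in>#J. (j, k) \<in> gt"
      using \<open>mlt X Y\<close> by (rule mlt_one_stepE)
    have "\<exists>j\<in>#undominated A J. (j, k) \<in> gt" if k: "k \<in># undominated A K" for k
    proof -
      obtain j where j: "j \<in># J" "(j, k) \<in> gt"
        using IJK(3) k by (auto simp: undominated_def)
      have "\<not> dominated A j"
        using k dominated_trans[OF _ j(2)] by (auto simp: undominated_def)
      with j show ?thesis by (auto simp: undominated_def)
    qed
    then show ?thesis using mle_one_step IJK(1,2) by simp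
  qed
  then show "mle X Y \<Longrightarrow> mle (undominated A X) (undominated A Y)"
    unfolding mle_def mlt_def by auto
qed

lemma mle_mod_refl: "mle_mod A Y Y"
  unfolding mle_mod_def
  by (rule exI[of _ "filter_mset (dominated A) Y"])
     (auto simp: add.commute[of "filter_mset _ _"] simp flip: undominated_partition)

lemma mle_mod_mle_trans: "mle X X' \<Longrightarrow> mle_mod A X' Y \<Longrightarrow> mle_mod A X Y"
  unfolding mle_mod_def using mle_trans by blast

lemma undominated_dominated_empty: "\<forall>\<gamma>\<in>#C. dominated A \<gamma> \<Longrightarrow> undominated A C = {#}"
  by (auto simp: undominated_def filter_mset_eq_conv)

lemma mle_mod_trans: "mle_mod A X Y \<Longrightarrow> mle_mod A Y Z \<Longrightarrow> mle_mod A X Z"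
proof -
  assume "mle_mod A X Y" "mle_mod A Y Z"
  then obtain C1 C2 where C1: "\<forall>\<gamma>\<in>#C1. dominated A \<gamma>" "mle X (C1 + undominated A Y)"
    and C2: "\<forall>\<gamma>\<in>#C2. dominated A \<gamma>" "mle Y (C2 + undominated A Z)"
    unfolding mle_mod_def by blast
  have "mle (undominated A Y) (undominated A (C2 + undominated A Z))"
    using mle_undominated C2(2) by blast
  also have "undominated A (C2 + undominated A Z) = undominated A Z"
    using undominated_dominated_empty[OF C2(1)] by (simp add: undominated_undominated)
  finally have "mle X (C1 + undominated A Z)"
    using C1(2) mle_add_left mle_trans by blast
  then show ?thesis using C1(1) unfolding mle_mod_def by blast
qed

lemma mle_mod_mono:
  assumes AB: "\<forall>\<alpha>\<in>A. \<alpha> \<in> B \<or> dominated B \<alpha>" and "mle_mod A X Y"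
  shows "mle_mod B X Y"
proof -
  obtain C where C: "\<forall>\<gamma>\<in>#C. dominated A \<gamma>" "mle X (C + undominated A Y)"
    using \<open>mle_mod A X Y\<close> unfolding mle_mod_def by blast
  have dom: "dominated B \<gamma>" if "dominated A \<gamma>" for \<gamma>
    using that AB dominated_trans unfolding dominated_def by blast
  have "undominated B (undominated A Y) = undominated B Y"
    using dom by (auto simp: undominated_def filter_filter_mset intro!: filter_mset_cong)
  then have "C + undominated A Y = (C + filter_mset (dominated B) (undominated A Y)) + undominated B Y"
    using undominated_partition[of "undominated A Y" B] by (simp add: ac_simps)
  moreover have "\<forall>\<gamma>\<in>#C + filter_mset (dominated B) (undominated A Y). dominated B \<gamma>"
    using C(1) dom by auto
  ultimately show ?thesis using C(2) unfolding mle_mod_def by metis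
qed

lemma mle_add_undominated: "mle X (add_mset \<beta> (undominated {\<beta>} X))"
proof -
  have "mle (undominated {\<beta>} X + filter_mset (dominated {\<beta>}) X) (undominated {\<beta>} X + {#\<beta>#})"
    by (intro mle_one_step) (auto simp: dominated_def)
  then show ?thesis using undominated_partition[of X "{\<beta>}"] by simp
qed

lemma mle_mod_add_dominated:
  assumes "mle_mod A X M" and "dominated A \<gamma>"
  shows "mle_mod A (add_mset \<gamma> (undominated {\<gamma>} X)) M"
proof -
  obtain C where C: "\<forall>\<gamma>\<in>#C. dominated A \<gamma>" "mle X (C + undominated A M)"
    using assms(1) unfolding mle_mod_def by blast
  have "mle (add_mset \<gamma> (undominated {\<gamma>} X)) (add_mset \<gamma> X)"
    using mle_add_left[OF undominated_mle, of "{#\<gamma>#}"] by simp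
  also have "mle (add_mset \<gamma> X) (add_mset \<gamma> C + undominated A M)"
    using mle_add_left[OF C(2), of "{#\<gamma>#}"] by simp
  finally show ?thesis using C(1) assms(2) unfolding mle_mod_def
    by (metis insert_iff set_mset_add_mset_insert)
qed

lemma mle_mod_imp_mlt: "mle_mod {\<alpha>} X (lexmax w) \<Longrightarrow> mlt X (lexmax (\<alpha> # w))"
proof -
  assume "mle_mod {\<alpha>} X (lexmax w)"
  then obtain C where C: "\<forall>\<gamma>\<in>#C. dominated {\<alpha>} \<gamma>" "mle X (C + undominated {\<alpha>} (lexmax w))"
    unfolding mle_mod_def by blast
  have "mlt (undominated {\<alpha>} (lexmax w) + C) (undominated {\<alpha>} (lexmax w) + {#\<alpha>#})"
    using C(1) by (intro mlt_one_step) (auto simp: dominated_def)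
  then show ?thesis using C(2) mle_mlt_trans by (simp add: ac_simps)
qed

lemma mle_mod_lexmax_Cons:
  assumes "mle_mod {\<alpha>, \<beta>} X (lexmax w)"
  shows "mle_mod {\<alpha>} (add_mset \<beta> (undominated {\<beta>} X)) (lexmax (\<beta> # w))"
proof -
  obtain C where C: "\<forall>\<gamma>\<in>#C. dominated {\<alpha>, \<beta>} \<gamma>" "mle X (C + undominated {\<alpha>, \<beta>} (lexmax w))"
    using assms unfolding mle_mod_def by blast
  have "mle (undominated {\<beta>} X) (undominated {\<beta>} C + undominated {\<alpha>, \<beta>} (lexmax w))"
    using mle_undominated[OF C(2), of "{\<beta>}"] by (simp add: undominated_undominated insert_commute)
  then have le: "mle (add_mset \<beta> (undominated {\<beta>} X))
      (add_mset \<beta> (undominated {\<beta>} C) + undominated {\<alpha>, \<beta>} (lexmax w))"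
    using mle_add_left[of _ _ "{#\<beta>#}"] by simp
  have C\<alpha>: "\<forall>\<gamma>\<in>#undominated {\<beta>} C. dominated {\<alpha>} \<gamma>"
    using C(1) by (auto simp: undominated_def dominated_def)
  have lexmax_eq: "undominated {\<alpha>} (lexmax (\<beta> # w))
      = undominated {\<alpha>} {#\<beta>#} + undominated {\<alpha>, \<beta>} (lexmax w)"
    using undominated_plus[of "{\<alpha>}" "{#\<beta>#}" "undominated {\<beta>} (lexmax w)"]
    by (simp add: undominated_undominated insert_commute)
  show ?thesis
  proof (cases "(\<alpha>, \<beta>) \<in> gt")
    case True
    then have "undominated {\<alpha>} {#\<beta>#} = {#}" by (simp add: undominated_def dominated_def)
    then show ?thesis using le C\<alpha> True lexmax_eq unfolding mle_mod_def
      by (intro exI[of _ "add_mset \<beta> (undominated {\<beta>} C)"]) (auto simp: dominated_def)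
  next
    case False
    then have "undominated {\<alpha>} {#\<beta>#} = {#\<beta>#}" by (simp add: undominated_def dominated_def)
    then show ?thesis using le C\<alpha> lexmax_eq unfolding mle_mod_def
      by (intro exI[of _ "undominated {\<beta>} C"]) (auto simp: ac_simps)
  qed
qed

lemma mle_mod_lexmax_Cons_mle_mod:
  "mle_mod {\<alpha>, \<beta>} X (lexmax w) \<Longrightarrow> mle_mod {\<alpha>} X (lexmax (\<beta> # w))"
  using mle_mod_lexmax_Cons mle_add_undominated mle_mod_mle_trans by blast

lemma mle_mod_pair_imp_mlt: "mle_mod {\<alpha>, \<beta>} X (lexmax w) \<Longrightarrow> mlt X (lexmax (\<alpha> # \<beta> # w))"
  using mle_mod_lexmax_Cons_mle_mod mle_mod_imp_mlt by blast

text \<open>The second component handles the \<open>\<alpha>\<close>-step inside a decreasing diagram for a peak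
  with label \<open>\<alpha>\<close>: it faces a \<open>\<rightarrow>\<^sub>2\<close>-sequence of smaller measure, but the combined
  measure need not decrease.\<close>

definition peak_order :: "(('i \<times> 'i list) \<times> ('i \<times> 'i list)) set" where
  "peak_order = inv_image (mult (gt\<inverse>) <*lex*> mult (gt\<inverse>)) (\<lambda>(\<alpha>, w). (lexmax (\<alpha> # w), lexmax w))"

lemma wf_peak_order: "wf peak_order"
  unfolding peak_order_def by (intro wf_inv_image wf_lex_prod wf_mult wf_less)

lemma peak_order_dominatedI:
  assumes "\<And>X. mle_mod A X M \<Longrightarrow> mlt X (lexmax (\<alpha> # w))"
    and "dominated A \<gamma>" and "mle_mod A (lexmax v) M"
  shows "((\<gamma>, v), (\<alpha>, w)) \<in> peak_order"
proof -
  have "mle_mod A (lexmax (\<gamma> # v)) M"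
    using mle_mod_add_dominated[OF assms(3,2)] by simp
  then show ?thesis using assms(1) unfolding peak_order_def mlt_def by simp
qed

lemma peak_order_same_labelI:
  assumes "mle_mod {\<beta>} (lexmax v) (lexmax w)"
  shows "((\<alpha>, v), (\<alpha>, \<beta> # w)) \<in> peak_order"
proof -
  have lt: "mlt (lexmax v) (lexmax (\<beta> # w))"
    using assms by (rule mle_mod_imp_mlt)
  then have "mle (lexmax (\<alpha> # v)) (lexmax (\<alpha> # \<beta> # w))"
    using mle_add_left[OF mle_undominated[OF mlt_imp_mle[OF lt]], of "{#\<alpha>#}"] by simp
  with lt show ?thesis unfolding peak_order_def mle_def mlt_def by auto
qed

end

section \<open>Decreasing local peaks imply commutation\<close>

locale decreasing_ars = wf_label_order gt for gt :: "('i \<times> 'i) set" +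
  fixes R1 R2 :: "'i \<Rightarrow> ('a \<times> 'a) set"
  assumes decreasing:
    "\<And>\<alpha> \<beta> a b c. (a, b) \<in> R1 \<alpha> \<Longrightarrow> (a, c) \<in> R2 \<beta> \<Longrightarrow> decreasing_peak gt R1 R2 \<alpha> \<beta> b c"
begin

inductive path2 :: "'a \<Rightarrow> 'i list \<Rightarrow> 'a \<Rightarrow> bool" where
  path2_Nil: "path2 x [] x"
| path2_Cons: "(x, y) \<in> R2 \<beta> \<Longrightarrow> path2 y w z \<Longrightarrow> path2 x (\<beta> # w) z"

definition valley :: "'i set \<Rightarrow> 'i multiset \<Rightarrow> 'a \<Rightarrow> 'a \<Rightarrow> bool" where
  "valley A M x t \<longleftrightarrow>
     (\<exists>w z. path2 x w z \<and> (t, z) \<in> (union_ars R1)\<^sup>* \<and> mle_mod A (lexmax w) M)"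

definition peak_closes :: "'i \<Rightarrow> 'i list \<Rightarrow> bool" where
  "peak_closes \<alpha> w \<longleftrightarrow>
     (\<forall>x y z. (y, x) \<in> R1 \<alpha> \<longrightarrow> path2 y w z \<longrightarrow> valley {\<alpha>} (lexmax w) x z)"

lemma valley_path2: "path2 x w z \<Longrightarrow> valley A (lexmax w) x z"
  unfolding valley_def using mle_mod_refl by blast

lemma valley_weaken:
  assumes "valley A M x t" and "(t', t) \<in> (union_ars R1)\<^sup>*" and "mle_mod A M M'"
  shows "valley A M' x t'"
  using assms unfolding valley_def by (meson mle_mod_trans rtrancl_trans)

lemma valley_mono:
  "valley A M x t \<Longrightarrow> \<forall>\<alpha>\<in>A. \<alpha> \<in> B \<or> dominated B \<alpha> \<Longrightarrow> valley B M x t"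
  unfolding valley_def using mle_mod_mono by blast

lemma valley_conv:
  assumes IH: "\<And>\<gamma> v. ((\<gamma>, v), (\<alpha>, w)) \<in> peak_order \<Longrightarrow> peak_closes \<gamma> v"
    and bound: "\<And>X. mle_mod A X M \<Longrightarrow> mlt X (lexmax (\<alpha> # w))"
    and dom: "\<forall>\<gamma>\<in>K. dominated A \<gamma>"
    and conv: "(x, y) \<in> (conv_K R1 R2 K)\<^sup>*" and "valley A M y t"
  shows "valley A M x t"
  using conv \<open>valley A M y t\<close>
proof (induction rule: converse_rtrancl_induct)
  case (step x x')
  then obtain v z where v: "path2 x' v z" "(t, z) \<in> (union_ars R1)\<^sup>*" "mle_mod A (lexmax v) M"
    unfolding valley_def by blast
  obtain \<gamma> where \<gamma>: "\<gamma> \<in> K" "(x', x) \<in> R1 \<gamma> \<or> (x, x') \<in> R2 \<gamma>"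
    using step.hyps(1) unfolding conv_K_def by blast
  show ?case
  proof (cases "(x, x') \<in> R2 \<gamma>")
    case True
    then have "path2 x (\<gamma> # v) z" using v(1) by (rule path2_Cons)
    moreover have "mle_mod A (lexmax (\<gamma> # v)) M"
      using mle_mod_add_dominated[OF v(3)] dom \<gamma>(1) by simp
    ultimately show ?thesis using v(2) unfolding valley_def by blast
  next
    case False
    have "peak_closes \<gamma> v"
      using IH peak_order_dominatedI[OF bound] dom \<gamma>(1) v(3) by blast
    then have "valley {\<gamma>} (lexmax v) x z"
      using False \<gamma>(2) v(1) unfolding peak_closes_def by blast
    then have "valley A (lexmax v) x z"
      using dom \<gamma>(1) by (blast intro: valley_mono)
    then show ?thesis using v(2,3) by (rule valley_weaken)
  qed
qed

lemma valley_R2_reflcl: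
  assumes "valley {\<alpha>, \<beta>} (lexmax w) y z" and "(x, y) \<in> (R2 \<beta>)\<^sup>="
  shows "valley {\<alpha>} (lexmax (\<beta> # w)) x z"
proof -
  obtain v t where v: "path2 y v t" "(z, t) \<in> (union_ars R1)\<^sup>*" "mle_mod {\<alpha>, \<beta>} (lexmax v) (lexmax w)"
    using assms(1) unfolding valley_def by blast
  show ?thesis
  proof (cases "x = y")
    case True
    then show ?thesis using v mle_mod_lexmax_Cons_mle_mod unfolding valley_def by blast
  next
    case False
    then have "path2 x (\<beta> # v) t" using assms(2) v(1) by (auto intro: path2_Cons)
    moreover have "mle_mod {\<alpha>} (lexmax (\<beta> # v)) (lexmax (\<beta> # w))"
      using mle_mod_lexmax_Cons[OF v(3)] by simp
    ultimately show ?thesis using v(2) unfolding valley_def by blast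
  qed
qed

lemma valley_right_of_peak:
  assumes IH: "\<And>\<gamma> v. ((\<gamma>, v), (\<alpha>, \<beta> # w)) \<in> peak_order \<Longrightarrow> peak_closes \<gamma> v"
    and step: "(x, x') \<in> ((R1 \<alpha>)\<inverse>)\<^sup>="
    and conv: "(x', y) \<in> (conv_K R1 R2 (below gt \<beta>))\<^sup>*" and path: "path2 y w z"
  shows "valley {\<alpha>, \<beta>} (lexmax w) x z"
proof -
  have "valley {\<beta>} (lexmax w) x' z"
  proof (rule valley_conv[OF IH _ _ conv valley_path2[OF path]])
    show "mlt X (lexmax (\<alpha> # \<beta> # w))" if "mle_mod {\<beta>} X (lexmax w)" for X
      using mle_mod_pair_imp_mlt mle_mod_mono[OF _ that, of "{\<alpha>, \<beta>}"] by blast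
    show "\<forall>\<gamma>\<in>below gt \<beta>. dominated {\<beta>} \<gamma>"
      by (simp add: below_def dominated_def)
  qed
  then obtain v t where v: "path2 x' v t" "(z, t) \<in> (union_ars R1)\<^sup>*" "mle_mod {\<beta>} (lexmax v) (lexmax w)"
    unfolding valley_def by blast
  have v\<alpha>\<beta>: "mle_mod {\<alpha>, \<beta>} (lexmax v) (lexmax w)"
    using mle_mod_mono[OF _ v(3)] by simp
  show ?thesis
  proof (cases "x = x'")
    case True
    then show ?thesis using v(1,2) v\<alpha>\<beta> unfolding valley_def by blast
  next
    case False
    then have "(x', x) \<in> R1 \<alpha>" using step by auto
    moreover have "peak_closes \<alpha> v"
      using IH peak_order_same_labelI[OF v(3)] by blast
    ultimately have "valley {\<alpha>} (lexmax v) x t"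
      using v(1) unfolding peak_closes_def by blast
    then show ?thesis using v(2) v\<alpha>\<beta> by (auto intro: valley_mono valley_weaken)
  qed
qed

lemma peak_closes_Cons:
  assumes IH: "\<And>\<gamma> v. ((\<gamma>, v), (\<alpha>, \<beta> # w)) \<in> peak_order \<Longrightarrow> peak_closes \<gamma> v"
  shows "peak_closes \<alpha> (\<beta> # w)"
  unfolding peak_closes_def
proof (intro allI impI)
  fix x y z assume peak: "(y, x) \<in> R1 \<alpha>" and "path2 y (\<beta> # w) z"
  then obtain y' where step: "(y, y') \<in> R2 \<beta>" and path: "path2 y' w z"
    by (auto elim: path2.cases)
  obtain x1 x2 x3 x4 where
      x1: "(x, x1) \<in> (conv_K R1 R2 (below gt \<alpha>))\<^sup>*" and
      x2: "(x1, x2) \<in> (R2 \<beta>)\<^sup>=" and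
      x3: "(x2, x3) \<in> (conv_K R1 R2 (below2 gt \<alpha> \<beta>))\<^sup>*" and
      x4: "(x3, x4) \<in> ((R1 \<alpha>)\<inverse>)\<^sup>=" and
      y': "(x4, y') \<in> (conv_K R1 R2 (below gt \<beta>))\<^sup>*"
    using decreasing[OF peak step] unfolding decreasing_peak_def by blast
  have "valley {\<alpha>, \<beta>} (lexmax w) x3 z"
    using IH x4 y' path by (rule valley_right_of_peak)
  then have "valley {\<alpha>, \<beta>} (lexmax w) x2 z"
    using valley_conv[OF IH mle_mod_pair_imp_mlt _ x3]
    by (auto simp: below2_def below_def dominated_def)
  then have "valley {\<alpha>} (lexmax (\<beta> # w)) x1 z"
    using x2 by (rule valley_R2_reflcl)
  then show "valley {\<alpha>} (lexmax (\<beta> # w)) x z"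
    using valley_conv[OF IH mle_mod_imp_mlt _ x1] by (auto simp: below_def dominated_def)
qed

lemma peak_closes_Nil: "peak_closes \<alpha> []"
  unfolding peak_closes_def
proof (intro allI impI)
  fix x y z assume "(y, x) \<in> R1 \<alpha>" "path2 y [] z"
  then have "(z, x) \<in> (union_ars R1)\<^sup>*"
    by (auto elim: path2.cases simp: union_ars_def)
  then show "valley {\<alpha>} (lexmax []) x z"
    by (rule valley_weaken[OF valley_path2[OF path2_Nil] _ mle_mod_refl])
qed

lemma peak_closes: "peak_closes \<alpha> w"
proof -
  have "peak_closes (fst p) (snd p)" for p
  proof (induction p rule: wf_induct[OF wf_peak_order])
    case (1 p)
    then show ?case
      by (cases p; cases "snd p") (auto intro: peak_closes_Nil peak_closes_Cons)
  qed
  then show ?thesis by (metis fst_conv snd_conv)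
qed

lemma rtrancl_union_ars_path2: "(x, z) \<in> (union_ars R2)\<^sup>* \<longleftrightarrow> (\<exists>w. path2 x w z)"
proof
  show "(x, z) \<in> (union_ars R2)\<^sup>* \<Longrightarrow> \<exists>w. path2 x w z"
    by (induction rule: converse_rtrancl_induct)
      (auto simp: union_ars_def intro: path2.intros)
  show "\<exists>w. path2 x w z \<Longrightarrow> (x, z) \<in> (union_ars R2)\<^sup>*"
  proof (elim exE)
    show "path2 x w z \<Longrightarrow> (x, z) \<in> (union_ars R2)\<^sup>*" for w
      by (induction rule: path2.induct) (auto simp: union_ars_def intro: converse_rtrancl_into_rtrancl)
  qed
qed

theorem decreasing_ars_commute: "ars_commute R1 R2"
  unfolding ars_commute_def commute_def
proof (rule subrelI)
  fix x t
  assume "(x, t) \<in> ((union_ars R1)\<inverse>)\<^sup>* O (union_ars R2)\<^sup>*"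
  then obtain y where "(y, x) \<in> (union_ars R1)\<^sup>*" and "\<exists>w. path2 y w t"
    by (auto simp: rtrancl_converse rtrancl_union_ars_path2)
  then have "\<exists>w z. path2 x w z \<and> (t, z) \<in> (union_ars R1)\<^sup>*"
  proof (induction rule: rtrancl_induct)
    case (step x' x)
    then obtain w z where "path2 x' w z" "(t, z) \<in> (union_ars R1)\<^sup>*" by blast
    moreover obtain \<alpha> where "(x', x) \<in> R1 \<alpha>" using step.hyps(2) by (auto simp: union_ars_def)
    ultimately show ?case
      using peak_closes[of \<alpha> w] unfolding peak_closes_def valley_def by (meson rtrancl_trans)
  qed blast
  then obtain w z where "path2 x w z" "(t, z) \<in> (union_ars R1)\<^sup>*" by blast
  then have "(x, z) \<in> (union_ars R2)\<^sup>*" and "(z, t) \<in> ((union_ars R1)\<inverse>)\<^sup>*"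
    by (auto simp: rtrancl_union_ars_path2 rtrancl_converse)
  then show "(x, t) \<in> (union_ars R2)\<^sup>* O ((union_ars R1)\<inverse>)\<^sup>*" by blast
qed

end

section \<open>Closing the bottom steps\<close>

lemma conv_K_mono:
  "(\<And>\<gamma>. R1 \<gamma> \<subseteq> R1' \<gamma>) \<Longrightarrow> (\<And>\<gamma>. R2 \<gamma> \<subseteq> R2' \<gamma>) \<Longrightarrow> conv_K R1 R2 K \<subseteq> conv_K R1' R2' K"
  unfolding conv_K_def by blast

lemma conv_K_empty [simp]: "conv_K R1 R2 {} = {}"
  by (simp add: conv_K_def)

lemma conv_K_swap: "conv_K R2 R1 K = (conv_K R1 R2 K)\<inverse>"
  unfolding conv_K_def by auto

lemma decreasing_peak_mono:
  assumes "\<And>\<gamma>. R1 \<gamma> \<subseteq> R1' \<gamma>" and "\<And>\<gamma>. R2 \<gamma> \<subseteq> R2' \<gamma>"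
    and "decreasing_peak gt R1 R2 \<alpha> \<beta> b c"
  shows "decreasing_peak gt R1' R2' \<alpha> \<beta> b c"
proof -
  have conv: "(conv_K R1 R2 K)\<^sup>* \<subseteq> (conv_K R1' R2' K)\<^sup>*" for K
    by (rule rtrancl_mono[OF conv_K_mono[OF assms(1,2)]])
  have R2: "(R2 \<beta>)\<^sup>= \<subseteq> (R2' \<beta>)\<^sup>=" and R1: "((R1 \<alpha>)\<inverse>)\<^sup>= \<subseteq> ((R1' \<alpha>)\<inverse>)\<^sup>="
    using assms(1)[of \<alpha>] assms(2)[of \<beta>] by blast+
  show ?thesis
    using assms(3) unfolding decreasing_peak_def
    by (rule subsetD[OF relcomp_mono[OF conv relcomp_mono[OF R2 relcomp_mono[OF conv relcomp_mono[OF R1 conv]]]]])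
qed

lemma decreasing_peak_swap:
  "decreasing_peak gt R2 R1 \<beta> \<alpha> c b \<longleftrightarrow> decreasing_peak gt R1 R2 \<alpha> \<beta> b c"
proof -
  have "((conv_K R2 R1 (below gt \<beta>))\<^sup>* O (R1 \<alpha>)\<^sup>= O (conv_K R2 R1 (below2 gt \<beta> \<alpha>))\<^sup>* O
      ((R2 \<beta>)\<inverse>)\<^sup>= O (conv_K R2 R1 (below gt \<alpha>))\<^sup>*)\<inverse>
    = (conv_K R1 R2 (below gt \<alpha>))\<^sup>* O (R2 \<beta>)\<^sup>= O (conv_K R1 R2 (below2 gt \<alpha> \<beta>))\<^sup>* O
      ((R1 \<alpha>)\<inverse>)\<^sup>= O (conv_K R1 R2 (below gt \<beta>))\<^sup>*"
    unfolding converse_relcomp conv_K_swap[of R1 R2] rtrancl_converse converse_Un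
    by (simp add: below2_def Un_commute O_assoc)
  then show ?thesis
    unfolding decreasing_peak_def by (metis converse_iff)
qed

lemma peak_rtrancl_left:
  assumes peak: "r\<inverse> O t \<subseteq> t\<^sup>= O s\<^sup>*" and converse_sub: "r\<inverse> \<subseteq> s"
  shows "(r\<^sup>*)\<inverse> O t \<subseteq> t\<^sup>= O s\<^sup>*"
proof (rule subrelI)
  fix b c assume "(b, c) \<in> (r\<^sup>*)\<inverse> O t"
  then obtain a where "(a, b) \<in> r\<^sup>*" and "(a, c) \<in> t" by blast
  then show "(b, c) \<in> t\<^sup>= O s\<^sup>*"
  proof (induction rule: rtrancl_induct)
    case (step b' b)
    then obtain e where e: "(b', e) \<in> t\<^sup>=" "(e, c) \<in> s\<^sup>*" by blast
    have "(b, b') \<in> s" using converse_sub step.hyps(2) by blast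
    show ?case
    proof (cases "b' = e")
      case True
      then show ?thesis using \<open>(b, b') \<in> s\<close> e(2) by (blast intro: converse_rtrancl_into_rtrancl)
    next
      case False
      then have "(b, e) \<in> t\<^sup>= O s\<^sup>*" using peak step.hyps(2) e(1) by blast
      then show ?thesis using e(2) by (blast intro: rtrancl_trans)
    qed
  qed blast
qed

lemma decreasing_peak_rtrancl_bot_left:
  fixes bot :: 'i
  assumes below_bot: "below gt bot = {}" and "(\<beta>, bot) \<in> gt"
    and peaks: "\<And>a b c. (a, b) \<in> R1 bot \<Longrightarrow> (a, c) \<in> R2 \<beta> \<Longrightarrow> decreasing_peak gt R1 R2 bot \<beta> b c"
    and "(a, b) \<in> (R1 bot)\<^sup>*" and "(a, c) \<in> R2 \<beta>"
  shows "decreasing_peak gt (R1(bot := (R1 bot)\<^sup>*)) R2 bot \<beta> b c"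
proof -
  txt \<open>As nothing lies below \<open>bot\<close>, each single peak closes as \<open>(R2 \<beta>)\<^sup>= O S\<^sup>*\<close>,
    a shape that survives prepending further \<open>bot\<close>-steps.\<close>
  define S where "S = conv_K (R1(bot := (R1 bot)\<^sup>*)) R2 (below gt \<beta>)"
  have below2: "below2 gt bot \<beta> = below gt \<beta>"
    using below_bot by (simp add: below2_def)
  have conv: "conv_K R1 R2 (below gt \<beta>) \<subseteq> S"
    unfolding S_def by (rule conv_K_mono) auto
  have R1_bot: "(R1 bot)\<inverse> \<subseteq> S"
    using \<open>(\<beta>, bot) \<in> gt\<close> unfolding S_def conv_K_def below_def by force
  have "(R1 bot)\<inverse> O R2 \<beta> \<subseteq> (R2 \<beta>)\<^sup>= O S\<^sup>*"
  proof (rule subrelI)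
    fix b c assume "(b, c) \<in> (R1 bot)\<inverse> O R2 \<beta>"
    then have "decreasing_peak gt R1 R2 bot \<beta> b c" using peaks by blast
    then have "(b, c) \<in> (R2 \<beta>)\<^sup>= O S\<^sup>* O ((R1 bot)\<inverse>)\<^sup>= O S\<^sup>*"
      unfolding decreasing_peak_def below2 below_bot conv_K_empty rtrancl_empty
      using rtrancl_mono[OF conv] by blast
    moreover have "S\<^sup>* O ((R1 bot)\<inverse>)\<^sup>= O S\<^sup>* \<subseteq> S\<^sup>*"
      using R1_bot by (blast intro: rtrancl_trans)
    ultimately show "(b, c) \<in> (R2 \<beta>)\<^sup>= O S\<^sup>*" by blast
  qed
  then have "(b, c) \<in> (R2 \<beta>)\<^sup>= O S\<^sup>*"
    using peak_rtrancl_left[OF _ R1_bot] assms(4,5) rtrancl_converseI by blast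
  then show ?thesis
    unfolding decreasing_peak_def below2 below_bot conv_K_empty rtrancl_empty S_def by blast
qed

lemma decreasing_peak_rtrancl_bot:
  fixes bot :: 'i
  assumes below_bot: "below gt bot = {}" and least: "\<And>\<alpha>. \<alpha> \<noteq> bot \<Longrightarrow> (\<alpha>, bot) \<in> gt"
    and bot_commute: "commute (R1 bot) (R2 bot)"
    and peaks: "\<And>\<alpha> \<beta> a b c. (\<alpha>, \<beta>) \<noteq> (bot, bot) \<Longrightarrow>
      (a, b) \<in> R1 \<alpha> \<Longrightarrow> (a, c) \<in> R2 \<beta> \<Longrightarrow> decreasing_peak gt R1 R2 \<alpha> \<beta> b c"
    and ab: "(a, b) \<in> (R1(bot := (R1 bot)\<^sup>*)) \<alpha>" and ac: "(a, c) \<in> (R2(bot := (R2 bot)\<^sup>*)) \<beta>"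
  shows "decreasing_peak gt (R1(bot := (R1 bot)\<^sup>*)) (R2(bot := (R2 bot)\<^sup>*)) \<alpha> \<beta> b c"
proof -
  have sub: "R \<gamma> \<subseteq> (R(bot := (R bot)\<^sup>*)) \<gamma>" for R :: "'i \<Rightarrow> ('a \<times> 'a) set" and \<gamma>
    by auto
  consider "\<alpha> = bot" "\<beta> = bot" | "\<alpha> = bot" "\<beta> \<noteq> bot" | "\<alpha> \<noteq> bot" "\<beta> = bot" | "\<alpha> \<noteq> bot" "\<beta> \<noteq> bot"
    by blast
  then show ?thesis
  proof cases
    case 1
    then have "(b, c) \<in> ((R1 bot)\<^sup>*)\<inverse> O (R2 bot)\<^sup>*" using ab ac by auto
    then have "(b, c) \<in> (R2 bot)\<^sup>* O ((R1 bot)\<^sup>*)\<inverse>"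
      using bot_commute unfolding commute_def rtrancl_converse by blast
    then show ?thesis
      using 1 below_bot unfolding decreasing_peak_def below2_def by auto
  next
    case 2
    then have "decreasing_peak gt (R1(bot := (R1 bot)\<^sup>*)) R2 bot \<beta> b c"
      using ab ac by (intro decreasing_peak_rtrancl_bot_left[OF below_bot least peaks]) auto
    then show ?thesis
      unfolding \<open>\<alpha> = bot\<close> by (rule decreasing_peak_mono[OF order_refl sub])
  next
    case 3
    have "decreasing_peak gt R2 R1 bot \<alpha> c' b'" if "(a', c') \<in> R2 bot" "(a', b') \<in> R1 \<alpha>" for a' b' c'
      using peaks[OF _ that(2,1)] 3 by (auto intro: decreasing_peak_swap[THEN iffD2])
    then have "decreasing_peak gt (R2(bot := (R2 bot)\<^sup>*)) R1 bot \<alpha> c b"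
      using 3 ab ac by (intro decreasing_peak_rtrancl_bot_left[OF below_bot least]) auto
    then have "decreasing_peak gt R1 (R2(bot := (R2 bot)\<^sup>*)) \<alpha> bot b c"
      by (rule decreasing_peak_swap[THEN iffD1])
    then show ?thesis
      unfolding \<open>\<beta> = bot\<close> by (rule decreasing_peak_mono[OF sub order_refl])
  next
    case 4
    then show ?thesis
      using ab ac peaks[of \<alpha> \<beta> a b c] by (intro decreasing_peak_mono[OF sub sub]) auto
  qed
qed

lemma rtrancl_union_ars_fun_upd_rtrancl: "(union_ars (R(i := (R i)\<^sup>*)))\<^sup>* = (union_ars R)\<^sup>*"
proof (rule rtrancl_subset)
  show "union_ars R \<subseteq> union_ars (R(i := (R i)\<^sup>*))"
    unfolding union_ars_def by (auto intro!: exI[of _ i])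
  show "union_ars (R(i := (R i)\<^sup>*)) \<subseteq> (union_ars R)\<^sup>*"
    unfolding union_ars_def by (auto intro: rtrancl_mono[THEN subsetD, rotated])
qed

theorem theorem6:
  fixes R1 R2 :: "'i \<Rightarrow> ('a \<times> 'a) set"
    and gt :: "('i \<times> 'i) set"
    and bot :: 'i
  assumes order: "irrefl gt" "trans gt"
    and wf: "wf (gt\<inverse>)"
    and least: "\<And>\<alpha>. \<alpha> \<noteq> bot \<Longrightarrow> (\<alpha>, bot) \<in> gt"
    and bot_commute: "commute (R1 bot) (R2 bot)"
    and peaks: "\<And>\<alpha> \<beta> a b c. (\<alpha>, \<beta>) \<noteq> (bot, bot) \<Longrightarrow>
                  (a, b) \<in> R1 \<alpha> \<Longrightarrow> (a, c) \<in> R2 \<beta> \<Longrightarrow> decreasing_peak gt R1 R2 \<alpha> \<beta> b c"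
  shows "ars_commute R1 R2"
proof -
  have "(bot, \<gamma>) \<notin> gt" for \<gamma>
    using order least[of \<gamma>] by (cases "\<gamma> = bot") (auto simp: irrefl_def dest: transD)
  then have below_bot: "below gt bot = {}"
    by (simp add: below_def)
  interpret decreasing_ars gt "R1(bot := (R1 bot)\<^sup>*)" "R2(bot := (R2 bot)\<^sup>*)"
    using order(2) wf decreasing_peak_rtrancl_bot[OF below_bot least bot_commute peaks]
    by unfold_locales blast+
  from decreasing_ars_commute show ?thesis
    unfolding ars_commute_def commute_def rtrancl_converse rtrancl_union_ars_fun_upd_rtrancl .
qed

end
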